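(* Let $B=F(b_1,\ldots,b_n)$ be a Ferrers board with $0\le b_1\le\cdots\le b_n$. Then, as polynomials in $x$, $$x^n=\sum_{k=0}^n \mathbf{rT}_{n-k}(B,p,q)\,(x-F_{b_1}(p,q))(x-F_{b_2}(p,q))\cdots(x-F_{b_k}(p,q)),$$ where the empty product ($k=0$) equals 1.
   Context: For $m\ge 1$, a Fibonacci tiling of height $m$ is a tiling of a column of height $m$ by tiles of height 1 and height 2 whose bottom-most tile has height 1. For such a tiling $T$, $\mathrm{one}(T)$ and $\mathrm{two}(T)$ denote the numbers of tiles of height 1 and 2, and $F_m(p,q)=\sum_T q^{\mathrm{one}(T)}p^{\mathrm{two}(T)}$ over all Fibonacci tilings of height $m$ (so $F_1=q$, $F_2=q^2$, $F_m=qF_{m-1}+pF_{m-2}$ for $m\ge 3$). There are no Fibonacci tilings of height $0$, and $F_0(p,q)=0$. A Ferrers board $F(b_1,\ldots,b_n)$ is the board whose columns, from left to right, have heights $b_1,\ldots,b_n$. A Fibonacci rook placement of $k$ tilings in $B=F(b_1,\ldots,b_n)$ consists of a choice of columns $1\le i_1<\cdots<i_k\le n$ together with, for each $s=1,\ldots,k$, a Fibonacci tiling of height $b_{i_s-(s-1)}$ placed in column $i_s$ (the number of cells of column $i_s$ not canceled by earlier tilings, each tiling canceling top cells of columns to its right so that after $s$ tilings the untiled columns have $b_1,\ldots,b_{n-s}$ uncanceled cells). Its weight is $q^{a}p^{b}$ where $a$ (resp. $b$) is the total number of tiles of height 1 (resp. 2) used. $\mathbf{rT}_k(B,p,q)$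 is the sum of the weights of all Fibonacci rook placements of $k$ tilings in $B$ (the empty placement has weight 1). *)

theory Defs
  imports "HOL-Computational_Algebra.Polynomial"
begin

text \<open>A Fibonacci tiling of height m: list of tile heights (each 1 or 2), listed from
bottom to top, summing to m, whose bottom-most tile has height 1.\<close>
definition fib_tilings :: "nat \<Rightarrow> nat list set" where
  "fib_tilings m = {ts. set ts \<subseteq> {1,2} \<and> sum_list ts = m \<and> ts \<noteq> [] \<and> hd ts = 1}"

definition tiling_wt :: "'a::comm_ring_1 \<Rightarrow> 'a \<Rightarrow> nat list \<Rightarrow> 'a" where
  "tiling_wt p q ts = q ^ count_list ts 1 * p ^ count_list ts 2"

definition FibT :: "nat \<Rightarrow> 'a::comm_ring_1 \<Rightarrow> 'a \<Rightarrow> 'a" where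
  "FibT m p q = (\<Sum>ts\<in>fib_tilings m. tiling_wt p q ts)"

text \<open>Fibonacci rook placements of k tilings in the Ferrers board with column heights
b (b ! (i-1) is the height of column i).  A placement is a pair (cs, ts): cs is the strictly
increasing list of chosen columns i_1 < ... < i_k (1-based), and ts ! s (0-based s) is a
Fibonacci tiling of height b_{i_{s+1} - s} placed in column i_{s+1}.\<close>
definition fib_rook_placements :: "nat list \<Rightarrow> nat \<Rightarrow> (nat list \<times> nat list list) set" where
  "fib_rook_placements b k = {(cs, ts). length cs = k \<and> length ts = k \<and>
      sorted_wrt (<) cs \<and> set cs \<subseteq> {1..length b} \<and>
      (\<forall>s<k. ts ! s \<in> fib_tilings (b ! (cs ! s - s - 1)))}"

definition rT :: "nat list \<Rightarrow> nat \<Rightarrow> 'a::comm_ring_1 \<Rightarrow> 'a \<Rightarrow> 'a" where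
  "rT b k p q = (\<Sum>(cs, ts)\<in>fib_rook_placements b k. \<Prod>s<k. tiling_wt p q (ts ! s))"

end

theory Submission
  imports Defs
begin

(* The placements of k + 1 tilings in b @ [c] either
   avoid the last column, or use it for their last tiling, which then has height
   (b @ [c]) ! (n - k); hence rT (b @ [c]) (k + 1) = rT b (k + 1) + F_{(b @ [c]) ! (n - k)} * rT b k.
   Writing P_j = (x - F_{b_1}) ... (x - F_{b_j}), multiply the expansion of x^n by
   x = (x - F_{b_{j+1}}) + F_{b_{j+1}} termwise: x * P_j = P_{j+1} + F_{b_{j+1}} * P_j, and the
   recurrence collects the resulting coefficients into those of x^(n+1). *)

lemma length_le_sum_list:
  "0 \<notin> set ts \<Longrightarrow> length ts \<le> sum_list (ts :: nat list)"
  by (induction ts) auto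

lemma finite_fib_tilings: "finite (fib_tilings m)"
proof (rule finite_subset)
  show "fib_tilings m \<subseteq> {ts. set ts \<subseteq> {1,2} \<and> length ts \<le> m}"
    by (auto simp: fib_tilings_def intro!: length_le_sum_list)
  show "finite {ts. set ts \<subseteq> {1::nat,2} \<and> length ts \<le> m}"
    by (rule finite_lists_length_le) simp
qed

lemma fib_rook_placements_0: "fib_rook_placements b 0 = {([], [])}"
  by (auto simp: fib_rook_placements_def)

lemma rT_0: "rT b 0 p q = 1"
  by (simp add: rT_def fib_rook_placements_0)

lemma fib_rook_placements_eq_empty_if_length_less:
  assumes "length b < k"
  shows "fib_rook_placements b k = {}"
proof (rule ccontr)
  assume "fib_rook_placements b k \<noteq> {}"
  then obtain cs ts where "distinct cs" "length cs = k" "set cs \<subseteq> {1..length b}"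
    by (auto simp: fib_rook_placements_def strict_sorted_iff)
  then have "k \<le> card {1..length b}"
    using card_mono[of "{1..length b}" "set cs"] by (simp add: distinct_card)
  with assms show False by simp
qed

lemma rT_eq_0_if_length_less: "length b < k \<Longrightarrow> rT b k p q = 0"
  by (simp add: rT_def fib_rook_placements_eq_empty_if_length_less)

lemma placed_tilings_append_board:
  assumes "set cs \<subseteq> {1..length b}" "k \<le> length cs"
  shows "(\<forall>s<k. ts ! s \<in> fib_tilings ((b @ b') ! (cs ! s - s - 1))) \<longleftrightarrow>
         (\<forall>s<k. ts ! s \<in> fib_tilings (b ! (cs ! s - s - 1)))"
proof -
  have "cs ! s - s - 1 < length b" if "s < k" for s
    using assms that nth_mem[of s cs] by fastforce
  then show ?thesis by (auto simp: nth_append)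
qed

lemma fib_rook_placements_snoc_without_last_column:
  assumes "Suc (length b) \<notin> set cs"
  shows "(cs, ts) \<in> fib_rook_placements (b @ [c]) k \<longleftrightarrow> (cs, ts) \<in> fib_rook_placements b k"
proof -
  have "set cs \<subseteq> {1..Suc (length b)} \<longleftrightarrow> set cs \<subseteq> {1..length b}"
    using assms by (auto simp: subset_iff le_Suc_eq)
  then show ?thesis
    using placed_tilings_append_board[of cs b k ts "[c]"]
    by (auto simp: fib_rook_placements_def)
qed

lemma fib_rook_placements_snoc_with_last_column:
  "(cs @ [Suc (length b)], ts @ [t]) \<in> fib_rook_placements (b @ [c]) (Suc k) \<longleftrightarrow>
     (cs, ts) \<in> fib_rook_placements b k \<and> t \<in> fib_tilings ((b @ [c]) ! (length b - k))"
  (is "?lhs \<longleftrightarrow> ?rhs")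
proof
  assume ?lhs
  then have lengths: "length cs = k" "length ts = k"
    and sorted: "sorted_wrt (<) (cs @ [Suc (length b)])"
    and cols: "set cs \<subseteq> {1..Suc (length b)}"
    and tiles: "\<forall>s<Suc k. (ts @ [t]) ! s \<in> fib_tilings ((b @ [c]) !
                   ((cs @ [Suc (length b)]) ! s - s - 1))"
    by (auto simp: fib_rook_placements_def)
  have "set cs \<subseteq> {1..length b}"
    using sorted cols by (fastforce simp: sorted_wrt_append)
  moreover have "\<forall>s<k. ts ! s \<in> fib_tilings ((b @ [c]) ! (cs ! s - s - 1))"
  proof (intro allI impI)
    fix s assume "s < k"
    then show "ts ! s \<in> fib_tilings ((b @ [c]) ! (cs ! s - s - 1))"
      using tiles[rule_format, of s] lengths by (simp add: nth_append_left)
  qed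
  then have "\<forall>s<k. ts ! s \<in> fib_tilings (b ! (cs ! s - s - 1))"
    using placed_tilings_append_board[of cs b k ts "[c]"] lengths \<open>set cs \<subseteq> {1..length b}\<close>
    by simp
  moreover have "t \<in> fib_tilings ((b @ [c]) ! (length b - k))"
    using tiles[rule_format, of k] lengths by (simp add: nth_append)
  ultimately show ?rhs
    using lengths sorted by (simp add: fib_rook_placements_def sorted_wrt_append)
next
  assume ?rhs
  then have "length cs = k" "length ts = k" "sorted_wrt (<) cs" "set cs \<subseteq> {1..length b}"
    and tiles: "\<forall>s<k. ts ! s \<in> fib_tilings ((b @ [c]) ! (cs ! s - s - 1))"
    and t: "t \<in> fib_tilings ((b @ [c]) ! (length b - k))"
    using placed_tilings_append_board[of cs b k ts "[c]"] by (auto simp: fib_rook_placements_def)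
  moreover have "(ts @ [t]) ! s \<in> fib_tilings ((b @ [c]) ! ((cs @ [Suc (length b)]) ! s - s - 1))"
    if "s < Suc k" for s
  proof (cases "s < k")
    case True
    then show ?thesis
      using tiles[rule_format, OF True] \<open>length cs = k\<close> \<open>length ts = k\<close>
      by (simp add: nth_append_left)
  next
    case False
    then have "s = k" using that by simp
    then show ?thesis using t \<open>length cs = k\<close> \<open>length ts = k\<close> by (simp add: nth_append)
  qed
  moreover have "sorted_wrt (<) (cs @ [Suc (length b)])"
    using \<open>sorted_wrt (<) cs\<close> \<open>set cs \<subseteq> {1..length b}\<close>
    by (auto simp: sorted_wrt_append)
  moreover have "set (cs @ [Suc (length b)]) \<subseteq> {1..Suc (length b)}"
    using \<open>set cs \<subseteq> {1..length b}\<close> by auto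
  ultimately show ?lhs
    unfolding fib_rook_placements_def by auto
qed

lemma sorted_wrt_less_ends_with_max:
  fixes cs :: "'a::linorder list"
  assumes "sorted_wrt (<) cs" "set cs \<subseteq> {..m}" "m \<in> set cs"
  obtains cs' where "cs = cs' @ [m]"
proof -
  obtain xs ys where cs: "cs = xs @ m # ys"
    using assms(3) split_list by metis
  have "ys = []"
    using assms(1,2) unfolding cs by (cases ys) (auto simp: sorted_wrt_append)
  then show ?thesis using cs that by simp
qed

lemma fib_rook_placements_snoc:
  "fib_rook_placements (b @ [c]) (Suc k) = fib_rook_placements b (Suc k) \<union>
     (\<lambda>((cs, ts), t). (cs @ [Suc (length b)], ts @ [t])) `
        (fib_rook_placements b k \<times> fib_tilings ((b @ [c]) ! (length b - k)))"
  (is "?L = ?A \<union> ?f ` ?B")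
proof (intro equalityI subsetI)
  fix x assume "x \<in> ?L"
  then obtain cs ts where x: "x = (cs, ts)" and mem: "(cs, ts) \<in> ?L" by (cases x) auto
  show "x \<in> ?A \<union> ?f ` ?B"
  proof (cases "Suc (length b) \<in> set cs")
    case False
    then show ?thesis using mem x fib_rook_placements_snoc_without_last_column by blast
  next
    case True
    from mem have "sorted_wrt (<) cs" "set cs \<subseteq> {..Suc (length b)}" "length ts = Suc k"
      by (auto simp: fib_rook_placements_def)
    then obtain cs' ts' t where cs: "cs = cs' @ [Suc (length b)]" and ts: "ts = ts' @ [t]"
      using True sorted_wrt_less_ends_with_max by (metis length_0_conv nat.distinct(1) rev_exhaust)
    then have "((cs', ts'), t) \<in> ?B"
      using mem fib_rook_placements_snoc_with_last_column by blast
    moreover have "x = ?f ((cs', ts'), t)" using x cs ts by simp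
    ultimately show ?thesis by blast
  qed
next
  fix x assume "x \<in> ?A \<union> ?f ` ?B"
  then consider (avoiding) cs ts where "x = (cs, ts)" "(cs, ts) \<in> ?A"
    | (last_column) cs ts t where "x = ?f ((cs, ts), t)" "((cs, ts), t) \<in> ?B"
    by (cases x) auto
  then show "x \<in> ?L"
  proof cases
    case avoiding
    then have "Suc (length b) \<notin> set cs" by (auto simp: fib_rook_placements_def)
    then show ?thesis using avoiding fib_rook_placements_snoc_without_last_column by blast
  next
    case last_column
    then show ?thesis using fib_rook_placements_snoc_with_last_column by simp
  qed
qed

lemma finite_fib_rook_placements: "finite (fib_rook_placements b k)"
proof (induction b arbitrary: k rule: rev_induct)
  case Nil
  then show ?case
    by (cases k) (simp_all add: fib_rook_placements_0 fib_rook_placements_eq_empty_if_length_less)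
next
  case (snoc c b)
  then show ?case
    by (cases k) (auto simp: fib_rook_placements_0 fib_rook_placements_snoc finite_fib_tilings)
qed

lemma rT_snoc:
  "rT (b @ [c]) (Suc k) p q =
     rT b (Suc k) p q + FibT ((b @ [c]) ! (length b - k)) p q * rT b k p q"
proof -
  let ?f = "\<lambda>((cs, ts), t). (cs @ [Suc (length b)], ts @ [t])"
  let ?A = "fib_rook_placements b (Suc k)"
  let ?T = "fib_tilings ((b @ [c]) ! (length b - k))"
  let ?B = "fib_rook_placements b k \<times> ?T"
  define w :: "nat \<Rightarrow> nat list \<times> nat list list \<Rightarrow> 'a"
    where "w j = (\<lambda>(cs, ts). \<Prod>s<j. tiling_wt p q (ts ! s))" for j
  have rT_eq: "rT b' j p q = sum (w j) (fib_rook_placements b' j)" for b' j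
    by (simp add: rT_def w_def)
  have disjoint: "?A \<inter> ?f ` ?B = {}"
    by (auto simp: fib_rook_placements_def)
  have inj: "inj_on ?f ?B"
    by (auto simp: inj_on_def)
  have finite_B: "finite ?B"
    using finite_fib_rook_placements finite_fib_tilings by blast
  have extend: "w (Suc k) (?f x) = (case x of (y, t) \<Rightarrow> w k y * tiling_wt p q t)"
    if "x \<in> ?B" for x
  proof -
    obtain cs ts t where x: "x = ((cs, ts), t)"
      by (metis prod.exhaust)
    with that have "length ts = k"
      by (simp add: fib_rook_placements_def)
    then have "(\<Prod>s<k. tiling_wt p q ((ts @ [t]) ! s)) = (\<Prod>s<k. tiling_wt p q (ts ! s))"
      by (intro prod.cong) (simp_all add: nth_append_left)
    then show ?thesis using \<open>length ts = k\<close> by (simp add: x w_def nth_append)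
  qed
  have "rT (b @ [c]) (Suc k) p q = sum (w (Suc k)) ?A + sum (w (Suc k)) (?f ` ?B)"
    unfolding rT_eq fib_rook_placements_snoc
    using finite_fib_rook_placements finite_B disjoint by (simp add: sum.union_disjoint)
  also have "sum (w (Suc k)) (?f ` ?B) = (\<Sum>(y, t)\<in>?B. w k y * tiling_wt p q t)"
    using extend by (simp add: sum.reindex[OF inj])
  also have "\<dots> = rT b k p q * FibT ((b @ [c]) ! (length b - k)) p q"
    by (simp add: rT_eq FibT_def sum_product sum.cartesian_product)
  finally show ?thesis by (simp add: rT_eq mult.commute)
qed

lemma power_x_expansion_Suc:
  fixes F r r' :: "nat \<Rightarrow> 'a::comm_ring_1"
  defines "P j \<equiv> \<Prod>i<j. [:- F i, 1:]"
  assumes expansion: "[:0, 1:] ^ n = (\<Sum>j\<le>n. smult (r (n - j)) (P j))"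
    and "r (Suc n) = 0" "r' 0 = r 0"
    and recurrence: "\<And>k. k \<le> n \<Longrightarrow> r' (Suc k) = r (Suc k) + F (n - k) * r k"
  shows "[:0, 1:] ^ Suc n = (\<Sum>j\<le>Suc n. smult (r' (Suc n - j)) (P j))"
proof -
  have times_x: "[:0, 1:] * P j = P (Suc j) + smult (F j) (P j)" for j
  proof -
    have "[:0, 1:] = [:- F j, 1:] + [:F j:]" by simp
    then show ?thesis by (simp add: P_def distrib_right mult.commute)
  qed
  have shifted: "(\<Sum>j\<le>n. smult (r (n - j)) (P (Suc j))) =
      (\<Sum>j\<le>n. smult (r (Suc n - j)) (P j)) + smult (r 0) (P (Suc n))"
  proof -
    have "(\<Sum>j\<le>n. smult (r (n - j)) (P (Suc j))) = (\<Sum>j\<le>Suc n. smult (r (Suc n - j)) (P j))"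
      by (subst sum.atMost_Suc_shift) (simp add: \<open>r (Suc n) = 0\<close>)
    then show ?thesis by simp
  qed
  have r'_eq: "r' (Suc n - j) = r (Suc n - j) + F j * r (n - j)" if "j \<le> n" for j
    using recurrence[of "n - j"] that by (simp add: Suc_diff_le)
  have "[:0, 1:] ^ Suc n = (\<Sum>j\<le>n. smult (r (n - j)) ([:0, 1:] * P j))"
    by (simp add: expansion sum_distrib_left mult_smult_right)
  also have "\<dots> = (\<Sum>j\<le>n. smult (r (n - j)) (P (Suc j))) +
      (\<Sum>j\<le>n. smult (F j * r (n - j)) (P j))"
    unfolding times_x by (simp add: smult_add_right sum.distrib mult.commute)
  also have "\<dots> = (\<Sum>j\<le>n. smult (r' (Suc n - j)) (P j)) + smult (r' 0) (P (Suc n))"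
    by (simp add: shifted r'_eq \<open>r' 0 = r 0\<close> smult_add_left sum.distrib)
  also have "\<dots> = (\<Sum>j\<le>Suc n. smult (r' (Suc n - j)) (P j))"
    by simp
  finally show ?thesis .
qed

(* The factors are taken from an arbitrary extension b @ e of the board, so that they do not
   change when a column is appended in the induction. *)
lemma power_x_expansion_rT:
  "[:0, 1:] ^ length b =
     (\<Sum>k\<le>length b. smult (rT b (length b - k) p q) (\<Prod>i<k. [:- FibT ((b @ e) ! i) p q, 1:]))"
proof (induction b arbitrary: e rule: rev_induct)
  case Nil
  then show ?case by (simp add: rT_0)
next
  case (snoc c b)
  have "rT (b @ [c]) (Suc k) p q =
      rT b (Suc k) p q + FibT ((b @ c # e) ! (length b - k)) p q * rT b k p q"
    if "k \<le> length b" for k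
    using rT_snoc[of b c k p q] that by (simp add: nth_append)
  then show ?case
    using power_x_expansion_Suc[where F = "\<lambda>i. FibT ((b @ c # e) ! i) p q"
        and r = "\<lambda>m. rT b m p q" and r' = "\<lambda>m. rT (b @ [c]) m p q", OF snoc.IH[of "c # e"]]
    by (simp add: rT_0 rT_eq_0_if_length_less)
qed

theorem theorem4:
  fixes b :: "nat list" and p q :: "'a::comm_ring_1"
  assumes "sorted b"
  shows "[:0, 1:] ^ length b =
    (\<Sum>k\<le>length b. smult (rT b (length b - k) p q) (\<Prod>i<k. [:- FibT (b ! i) p q, 1:]))"
  using power_x_expansion_rT[of b p q "[]"] by simp

end
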